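(* For every $n\ge1$, the permutation $w=n\,(n-1)\cdots2\,1$ is the unique $w\in S_n$ with $\operatorname{stab}(w)=1$.
   Context: $T(w)$ is the standard skew tableau of shape $(1)\cup\cdots\cup(1)$ ($n$ single cells placed along an anti-diagonal, each strictly northeast of the previous, no shared rows or columns) whose reading word (rows read left to right, from bottom row to top row) is $w$. $\operatorname{stab}(w)=\operatorname{stab}(T(w))$, where for a standard skew tableau $S$ with $m$ cells whose row lengths weakly decrease from top to bottom: $S^{(k)}$ is obtained by attaching $k-1$ shifted copies of $S$ to the right of $S$ (row $i$ of $S^{(k)}$ begins in the same column as row $i$ of $S$ and consists of the entries of row $i$ of $S$, followed by these entries plus $m$, ..., plus $(k-1)m$); $S$ stabilizes at $k$ if every entry in $[(k-1)m+1,km]$ lies in the same row of $\operatorname{Rect}(S^{(k)})$ as in $S^{(k)}$ ($\operatorname{Rect}$ = jeu de taquin rectification); $\operatorname{stab}(S)$ is the least such $k\ge1$. *)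

theory Defs
  imports Main
begin

text \<open>A (skew) tableau is a finite partial map from cells (row, column) to entries.
  English convention: row 0 is the top row, rows grow downwards, columns grow to the right.\<close>

type_synonym tab = "nat \<times> nat \<Rightarrow> nat option"

text \<open>T(w): single cells along an anti-diagonal, reading word (rows bottom to top) equal to w.
  For w of length n, the entry w!j sits in row n-1-j, column j.\<close>

definition antidiag_tab :: "nat list \<Rightarrow> tab" where
  "antidiag_tab w = (\<lambda>(r, c). if r < length w \<and> c = length w - 1 - r
                               then Some (w ! (length w - 1 - r)) else None)"

definition row_cols :: "tab \<Rightarrow> nat \<Rightarrow> nat set" where
  "row_cols S r = {c. S (r, c) \<noteq> None}"

text \<open>S^(k): row r of S (starting at column c0, length l) followed by k-1 shifted copies,
  the t-th copy having entries increased by t*m, m the number of cells of S.\<close>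

definition tab_power :: "tab \<Rightarrow> nat \<Rightarrow> tab" where
  "tab_power S k = (\<lambda>(r, c).
     let cs = row_cols S r; c0 = Min cs; l = card cs; m = card (dom S) in
     if cs \<noteq> {} \<and> c0 \<le> c \<and> c < c0 + k * l
     then map_option (\<lambda>x. x + ((c - c0) div l) * m) (S (r, c0 + (c - c0) mod l))
     else None)"

definition inner_cells :: "tab \<Rightarrow> (nat \<times> nat) set" where
  "inner_cells T = {(r, c). (r, c) \<notin> dom T \<and> (\<exists>(r', c') \<in> dom T. r \<le> r' \<and> c \<le> c')}"

definition inner_corners :: "tab \<Rightarrow> (nat \<times> nat) set" where
  "inner_corners T = {(r, c). (r, c) \<in> inner_cells T \<and> (Suc r, c) \<notin> inner_cells T
                                 \<and> (r, Suc c) \<notin> inner_cells T}"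

text \<open>Deterministic choice of the inner corner: the lowest one.\<close>

definition chosen_corner :: "tab \<Rightarrow> nat \<times> nat" where
  "chosen_corner T = (THE x. x \<in> inner_corners T \<and> (\<forall>y \<in> inner_corners T. fst y \<le> fst x))"

fun slide :: "nat \<Rightarrow> tab \<Rightarrow> nat \<times> nat \<Rightarrow> tab" where
  "slide 0 T h = T"
| "slide (Suc f) T (r, c) =
     (case T (r, Suc c) of
        None \<Rightarrow> (case T (Suc r, c) of
                   None \<Rightarrow> T
                 | Some b \<Rightarrow> slide f (T((r, c) := Some b, (Suc r, c) := None)) (Suc r, c))
      | Some a \<Rightarrow> (case T (Suc r, c) of
                   None \<Rightarrow> slide f (T((r, c) := Some a, (r, Suc c) := None)) (r, Suc c)
                 | Some b \<Rightarrow>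
                     (if a < b then slide f (T((r, c) := Some a, (r, Suc c) := None)) (r, Suc c)
                      else slide f (T((r, c) := Some b, (Suc r, c) := None)) (Suc r, c))))"

definition rect_step :: "tab \<Rightarrow> tab" where
  "rect_step T = (if inner_cells T = {} then T
                  else slide (card (dom T) + 1) T (chosen_corner T))"

text \<open>Rectification: slide into inner corners until the inner shape is empty
  (each slide shrinks the inner shape, so card (inner_cells T) steps suffice).\<close>

definition rect :: "tab \<Rightarrow> tab" where
  "rect T = (rect_step ^^ card (inner_cells T)) T"

definition stabilizes_at :: "tab \<Rightarrow> nat \<Rightarrow> bool" where
  "stabilizes_at S k = (let m = card (dom S); Sk = tab_power S k; R = rect Sk in
     \<forall>e r c r' c'. (k - 1) * m < e \<and> e \<le> k * m \<longrightarrow> Sk (r, c) = Some e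
        \<longrightarrow> R (r', c') = Some e \<longrightarrow> r' = r)"

definition stab :: "tab \<Rightarrow> nat" where
  "stab S = (if \<exists>k\<ge>1. stabilizes_at S k then LEAST k. k \<ge> 1 \<and> stabilizes_at S k else 0)"

definition stab_word :: "nat list \<Rightarrow> nat" where
  "stab_word w = stab (antidiag_tab w)"

end

theory Submission
  imports Defs "HOL-Library.Product_Order"
begin

text \<open>Since \<open>S^(1) = S\<close>, \<open>stab(w) = 1\<close> says that rectifying \<open>T(w)\<close> keeps every entry in its row.
  Read \<open>T(w)\<close> as a strip: row \<open>r < n\<close> holds one entry, in column \<open>n - 1 - r\<close>. Rectification
  always slides into the inner corner left of the lowest indented row \<open>R\<close>. The entry of row \<open>R\<close>
  then moves one column left, unless row \<open>R\<close> is indented by one and the entry directly below it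
  (already in column 0) is not larger; in that case this entry is lifted into row \<open>R\<close>. Jeu de
  taquin never moves an entry down or right, so a lifted entry ends above its original row.
  Without lifts every entry ends in column 0 of its own row, which forces the entries to increase
  down the column, i.e. \<open>w = n \<dots> 2 1\<close>; and for this \<open>w\<close> no lift ever happens.\<close>

section \<open>Jeu de taquin on skew shapes\<close>

text \<open>Skew diagrams are exactly the sets of cells that are convex for the componentwise order.\<close>

definition skew_shape :: "(nat \<times> nat) set \<Rightarrow> bool" where
  "skew_shape A \<longleftrightarrow> (\<forall>x\<in>A. \<forall>z\<in>A. \<forall>y. x \<le> y \<and> y \<le> z \<longrightarrow> y \<in> A)"

definition outer_corner :: "(nat \<times> nat) set \<Rightarrow> nat \<times> nat \<Rightarrow> bool" where
  "outer_corner A x \<longleftrightarrow> x \<in> A \<and> (Suc (fst x), snd x) \<notin> A \<and> (fst x, Suc (snd x)) \<notin> A"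

lemma slide_Suc_cases:
  obtains "T (r, Suc c) = None" "T (Suc r, c) = None" "slide (Suc f) T (r, c) = T"
  | h' a where "h' = (r, Suc c) \<or> h' = (Suc r, c)" "T h' = Some a"
      "slide (Suc f) T (r, c) = slide f (T((r, c) := Some a, h' := None)) h'"
proof (cases "T (r, Suc c)"; cases "T (Suc r, c)")
  fix a b assume "T (r, Suc c) = Some a" "T (Suc r, c) = Some b"
  then show thesis using that(2)[of "(r, Suc c)" a] that(2)[of "(Suc r, c)" b]
    by (cases "a < b") auto
qed (use that in auto)

lemma slide_moves_entry_northwest:
  assumes "T h = None" "T x = Some e"
  shows "\<exists>y. slide f T h y = Some e \<and> y \<le> x"
  using assms
proof (induction f arbitrary: T h x)
  case 0
  then show ?case by (intro exI[of _ x]) simp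
next
  case (Suc f)
  obtain r c where h: "h = (r, c)" by fastforce
  show ?case
  proof (cases rule: slide_Suc_cases[of T r c f])
    case 1
    then show ?thesis using Suc.prems h by (intro exI[of _ x]) simp
  next
    case (2 h' a)
    let ?T' = "T(h := Some a, h' := None)"
    have step: "slide (Suc f) T h = slide f ?T' h'" unfolding h by (rule 2(3))
    have "h \<le> h'" using 2(1) h by auto
    have "\<exists>x'. ?T' x' = Some e \<and> x' \<le> x"
    proof (cases "x = h'")
      case True
      then show ?thesis using \<open>h \<le> h'\<close> Suc.prems 2(2) by (intro exI[of _ h]) auto
    next
      case False
      then show ?thesis using Suc.prems by (intro exI[of _ x]) auto
    qed
    then obtain x' where x': "?T' x' = Some e" "x' \<le> x" by blast
    have "?T' h' = None" by simp
    from Suc.IH[OF this x'(1)] obtain y where "slide f ?T' h' y = Some e" "y \<le> x'"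
      by blast
    then show ?thesis unfolding step using x'(2) by (blast intro: order_trans)
  qed
qed

text \<open>Every move of the hole raises its anti-diagonal index \<open>row + column\<close>, so the cells of \<open>D\<close>
  beyond the starting index bound the number of moves, and the fuel never runs out.\<close>

lemma dom_slide:
  assumes "finite D" "h \<in> D" "dom T = D - {h}"
    and "card {d\<in>D. fst h + snd h < fst d + snd d} < f"
  shows "\<exists>e. outer_corner D e \<and> dom (slide f T h) = D - {e}"
  using assms(2-)
proof (induction f arbitrary: T h)
  case 0
  then show ?case by simp
next
  case (Suc f)
  obtain r c where h: "h = (r, c)" by fastforce
  show ?case
  proof (cases rule: slide_Suc_cases[of T r c f])
    case 1
    have "(Suc r, c) \<notin> dom T" "(r, Suc c) \<notin> dom T" using 1 by auto
    then have "outer_corner D h" using Suc.prems(1,2) h unfolding outer_corner_def by auto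
    then show ?thesis using 1(3) Suc.prems(2) h by auto
  next
    case (2 h' a)
    let ?T' = "T(h := Some a, h' := None)"
    have step: "slide (Suc f) T h = slide f ?T' h'" unfolding h by (rule 2(3))
    have diag: "fst h' + snd h' = Suc (fst h + snd h)" using 2(1) h by auto
    have h'D: "h' \<in> D" using 2(2) Suc.prems(2) by auto
    have "h \<noteq> h'" using diag by auto
    then have dom': "dom ?T' = D - {h'}" using Suc.prems(1,2) by auto
    let ?beyond = "\<lambda>x. {d\<in>D. fst x + snd x < fst d + snd d}"
    have "?beyond h' \<subseteq> ?beyond h" "h' \<in> ?beyond h - ?beyond h'" using h'D diag by auto
    then have "card (?beyond h') < card (?beyond h)"
      using assms(1) by (intro psubset_card_mono) auto
    then have "card (?beyond h') < f" using Suc.prems(3) by simp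
    then show ?thesis unfolding step using Suc.IH[OF h'D dom'] by blast
  qed
qed

lemma mem_inner_cells_iff: "x \<in> inner_cells T \<longleftrightarrow> x \<notin> dom T \<and> (\<exists>z\<in>dom T. x \<le> z)"
proof -
  obtain r c where "x = (r, c)" by fastforce
  then show ?thesis unfolding inner_cells_def less_eq_prod_def by (simp add: Bex_def)
qed

lemma inner_corners_subset_inner_cells: "inner_corners T \<subseteq> inner_cells T"
  unfolding inner_corners_def by auto

lemma finite_inner_cells:
  assumes "finite (dom T)"
  shows "finite (inner_cells T)"
proof (rule finite_subset)
  show "inner_cells T \<subseteq> (\<Union>z\<in>dom T. {..fst z} \<times> {..snd z})"
    by (auto simp: mem_inner_cells_iff less_eq_prod_def)
qed (use assms in auto)

lemma inner_corners_nonempty: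
  assumes "finite (dom T)" "inner_cells T \<noteq> {}"
  shows "inner_corners T \<noteq> {}"
proof -
  let ?diag = "\<lambda>x::nat \<times> nat. fst x + snd x"
  have fin: "finite (inner_cells T)" using finite_inner_cells[OF assms(1)] .
  obtain x where x: "x \<in> inner_cells T" "?diag x = Max (?diag ` inner_cells T)"
    using Max_in[of "?diag ` inner_cells T"] fin assms(2) by fastforce
  have "?diag y \<le> ?diag x" if "y \<in> inner_cells T" for y
    using x(2) fin that by simp
  then have "x \<in> inner_corners T"
    using x(1) unfolding inner_corners_def by (cases x) fastforce
  then show ?thesis by blast
qed

lemma inner_corners_same_row:
  assumes "skew_shape (dom T)" "(r, c) \<in> inner_corners T" "(r, c') \<in> inner_corners T"
  shows "c = c'"
proof -
  have "\<not> c < c'" if "(r, c) \<in> inner_corners T" "(r, c') \<in> inner_corners T" for c c'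
  proof
    assume "c < c'"
    then have le: "(r, Suc c) \<le> (r, c')" by simp
    have "(r, c') \<in> inner_cells T" "(r, Suc c) \<notin> inner_cells T"
      using that unfolding inner_corners_def by auto
    then obtain z where z: "z \<in> dom T" "(r, c') \<le> z" "(r, c') \<notin> dom T" "(r, Suc c) \<in> dom T"
      using le unfolding mem_inner_cells_iff by (blast intro: order_trans)
    then show False using assms(1) le unfolding skew_shape_def by blast
  qed
  then show ?thesis using assms(2,3) by (meson linorder_neqE_nat)
qed

lemma chosen_corner_mem_inner_corners:
  assumes "finite (dom T)" "skew_shape (dom T)" "inner_cells T \<noteq> {}"
  shows "chosen_corner T \<in> inner_corners T"
proof -
  let ?C = "inner_corners T"
  have "finite ?C"
    using finite_inner_cells[OF assms(1)] inner_corners_subset_inner_cells by (rule finite_subset[rotated])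
  then obtain x where x: "x \<in> ?C" "fst x = Max (fst ` ?C)"
    using Max_in[of "fst ` ?C"] inner_corners_nonempty[OF assms(1,3)] by fastforce
  then have lowest: "x \<in> ?C \<and> (\<forall>y\<in>?C. fst y \<le> fst x)"
    using \<open>finite ?C\<close> by simp
  have "y = x" if "y \<in> ?C \<and> (\<forall>z\<in>?C. fst z \<le> fst y)" for y
    using inner_corners_same_row[OF assms(2)] lowest that by (metis antisym prod.collapse)
  then have "chosen_corner T = x"
    unfolding chosen_corner_def using lowest by (rule the_equality[rotated])
  then show ?thesis using x(1) by simp
qed

lemma le_neq_imp_succ_le:
  fixes x y :: "nat \<times> nat"
  assumes "x \<le> y" "x \<noteq> y"
  shows "(Suc (fst x), snd x) \<le> y \<or> (fst x, Suc (snd x)) \<le> y"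
  using assms by (cases x, cases y) auto

lemma skew_shape_insert_inner_corner:
  assumes skew: "skew_shape (dom T)" and c: "c \<in> inner_corners T"
  shows "skew_shape (insert c (dom T))"
  unfolding skew_shape_def
proof (intro ballI allI impI)
  fix x y z
  assume x: "x \<in> insert c (dom T)" and z: "z \<in> insert c (dom T)" and "x \<le> y \<and> y \<le> z"
  then have xy: "x \<le> y" and yz: "y \<le> z" by auto
  have between: "y \<in> dom T" if "x' \<in> dom T" "z' \<in> dom T" "x' \<le> y" "y \<le> z'" for x' z'
    using skew that unfolding skew_shape_def by blast
  have "c \<in> inner_cells T" using c inner_corners_subset_inner_cells by blast
  then obtain w where w: "w \<in> dom T" "c \<le> w" unfolding mem_inner_cells_iff by blast
  show "y \<in> insert c (dom T)"
  proof (cases "y = c")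
    case False
    consider "x \<in> dom T" "z \<in> dom T" | "x \<in> dom T" "z = c" | "x = c" "z \<in> dom T" | "x = c" "z = c"
      using x z by blast
    then show ?thesis
    proof cases
      case 1
      then show ?thesis using between xy yz by blast
    next
      case 2
      then show ?thesis using between[of x w] w xy yz by (blast intro: order_trans)
    next
      case 3
      then obtain nb where nb: "nb = (Suc (fst c), snd c) \<or> nb = (fst c, Suc (snd c))" "nb \<le> y"
        using le_neq_imp_succ_le[OF xy] False by blast
      have "nb \<notin> inner_cells T" using c nb(1) unfolding inner_corners_def by (cases c) auto
      then have "nb \<in> dom T"
        using nb(2) yz 3(2) unfolding mem_inner_cells_iff by (blast intro: order_trans)
      then show ?thesis using between nb(2) yz 3(2) by blast
    next
      case 4
      then show ?thesis using xy yz by simp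
    qed
  qed simp
qed

lemma skew_shape_Diff_outer_corner:
  assumes skew: "skew_shape D" and e: "outer_corner D e"
  shows "skew_shape (D - {e})"
  unfolding skew_shape_def
proof (intro ballI allI impI)
  fix x y z
  assume x: "x \<in> D - {e}" and z: "z \<in> D - {e}" and "x \<le> y \<and> y \<le> z"
  then have yD: "y \<in> D" and yz: "y \<le> z" using skew unfolding skew_shape_def by blast+
  have "y \<noteq> e"
  proof
    assume "y = e"
    then obtain nb where "nb = (Suc (fst e), snd e) \<or> nb = (fst e, Suc (snd e))" "nb \<le> z"
      using le_neq_imp_succ_le[OF yz] z by blast
    moreover have "e \<le> nb" if "nb = (Suc (fst e), snd e) \<or> nb = (fst e, Suc (snd e))" for nb
      using that by (cases e) auto
    ultimately show False using skew e z \<open>y = e\<close> unfolding skew_shape_def outer_corner_def by blast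
  qed
  then show "y \<in> D - {e}" using yD by simp
qed

lemma rect_step_skew_shape:
  assumes fin: "finite (dom T)" and skew: "skew_shape (dom T)"
  shows "finite (dom (rect_step T)) \<and> skew_shape (dom (rect_step T))"
proof (cases "inner_cells T = {}")
  case False
  let ?c = "chosen_corner T" and ?D = "insert (chosen_corner T) (dom T)"
  have c: "?c \<in> inner_corners T" using chosen_corner_mem_inner_corners[OF fin skew False] .
  then have "?c \<in> inner_cells T" using inner_corners_subset_inner_cells by blast
  then have "?c \<notin> dom T" by (simp add: mem_inner_cells_iff)
  then have "dom T = ?D - {?c}" by simp
  moreover have "card {d\<in>?D. fst ?c + snd ?c < fst d + snd d} < card (dom T) + 1"
    using card_mono[OF fin, of "{d\<in>?D. fst ?c + snd ?c < fst d + snd d}"] by fastforce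
  ultimately have "\<exists>e. outer_corner ?D e \<and> dom (slide (card (dom T) + 1) T ?c) = ?D - {e}"
    using fin by (intro dom_slide) auto
  then obtain e where e: "outer_corner ?D e" "dom (rect_step T) = ?D - {e}"
    using False unfolding rect_step_def by auto
  have "skew_shape ?D" using skew_shape_insert_inner_corner[OF skew c] .
  then show ?thesis using skew_shape_Diff_outer_corner[OF _ e(1)] e(2) fin by simp
qed (use assms in \<open>simp add: rect_step_def\<close>)

lemma rect_step_moves_entry_northwest:
  assumes fin: "finite (dom T)" and skew: "skew_shape (dom T)" and "T x = Some e"
  shows "\<exists>y. rect_step T y = Some e \<and> y \<le> x"
proof (cases "inner_cells T = {}")
  case False
  have "chosen_corner T \<in> inner_cells T"
    using chosen_corner_mem_inner_corners[OF fin skew False] inner_corners_subset_inner_cells by blast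
  then have "T (chosen_corner T) = None" unfolding mem_inner_cells_iff by blast
  then show ?thesis using slide_moves_entry_northwest assms(3) False unfolding rect_step_def by simp
next
  case True
  then show ?thesis using assms(3) unfolding rect_step_def by (intro exI[of _ x]) simp
qed

lemma funpow_rect_step_skew_shape:
  assumes "finite (dom T)" "skew_shape (dom T)"
  shows "finite (dom ((rect_step ^^ k) T)) \<and> skew_shape (dom ((rect_step ^^ k) T))"
  using assms by (induction k) (simp_all add: rect_step_skew_shape)

section \<open>Rectification of tableaux with one cell per row\<close>

definition strip_tab :: "nat \<Rightarrow> (nat \<Rightarrow> nat) \<Rightarrow> (nat \<Rightarrow> nat) \<Rightarrow> tab" where
  "strip_tab n v p = (\<lambda>(r, c). if r < n \<and> c = p r then Some (v r) else None)"

lemma strip_tab_apply [simp]: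
  "strip_tab n v p (r, c) = (if r < n \<and> c = p r then Some (v r) else None)"
  by (simp add: strip_tab_def)

lemma dom_strip_tab: "dom (strip_tab n v p) = (\<lambda>r. (r, p r)) ` {..<n}"
  by (auto simp: dom_def strip_tab_def split: if_splits)

lemma finite_dom_strip_tab: "finite (dom (strip_tab n v p))"
  by (simp add: dom_strip_tab)

lemma card_dom_strip_tab: "card (dom (strip_tab n v p)) = n"
  unfolding dom_strip_tab by (simp add: card_image inj_on_def)

lemma strip_tab_cong:
  "(\<And>r. r < n \<Longrightarrow> v r = v' r) \<Longrightarrow> (\<And>r. r < n \<Longrightarrow> p r = p' r) \<Longrightarrow>
    strip_tab n v p = strip_tab n v' p'"
  by (auto simp: fun_eq_iff strip_tab_def)

lemma antidiag_tab_eq_strip_tab: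
  "antidiag_tab w = strip_tab (length w) (\<lambda>r. w ! (length w - 1 - r)) (\<lambda>r. length w - 1 - r)"
  by (auto simp: fun_eq_iff antidiag_tab_def)

lemma inner_cells_strip_tab:
  assumes "antimono_on {..<n} p"
  shows "inner_cells (strip_tab n v p) = {(r, c). r < n \<and> c < p r}"
proof -
  have "(r, c) \<in> inner_cells (strip_tab n v p) \<longleftrightarrow> r < n \<and> c < p r" for r c
  proof
    assume "(r, c) \<in> inner_cells (strip_tab n v p)"
    then obtain r' where r': "r' < n" "r \<le> r'" "c \<le> p r'" "r < n \<longrightarrow> c \<noteq> p r"
      unfolding mem_inner_cells_iff dom_strip_tab by (auto simp: image_iff)
    moreover have "p r' \<le> p r" using assms r' by (simp add: monotone_on_def)
    ultimately show "r < n \<and> c < p r" by simp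
  next
    assume "r < n \<and> c < p r"
    then show "(r, c) \<in> inner_cells (strip_tab n v p)"
      unfolding mem_inner_cells_iff dom_strip_tab by force
  qed
  then show ?thesis by auto
qed

lemma skew_shape_strip_tab:
  assumes "antimono_on {..<n} p"
  shows "skew_shape (dom (strip_tab n v p))"
  unfolding skew_shape_def
proof (intro ballI allI impI)
  fix x y z
  assume "x \<in> dom (strip_tab n v p)" "z \<in> dom (strip_tab n v p)" "x \<le> y \<and> y \<le> z"
  then obtain r r' a c where "r' < n" "r \<le> a" "a \<le> r'" "p r \<le> c" "c \<le> p r'" "y = (a, c)"
    unfolding dom_strip_tab by (cases y) auto
  moreover from this have "p r' \<le> p a" "p a \<le> p r"
    using assms by (simp_all add: monotone_on_def)
  ultimately show "y \<in> dom (strip_tab n v p)" by (simp add: dom_def)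
qed

lemma inner_corners_strip_tab:
  assumes "antimono_on {..<n} p"
  shows "(r, c) \<in> inner_corners (strip_tab n v p) \<longleftrightarrow>
    r < n \<and> c < p r \<and> (Suc r < n \<longrightarrow> p (Suc r) \<le> c) \<and> p r \<le> Suc c"
  unfolding inner_corners_def inner_cells_strip_tab[OF assms] by auto

lemma rect_step_strip_tab:
  assumes p: "antimono_on {..<n} p" and R: "R < n" "0 < p R"
    and lowest: "\<forall>r<n. 0 < p r \<longrightarrow> r \<le> R"
  shows "rect_step (strip_tab n v p) = slide (Suc n) (strip_tab n v p) (R, p R - 1)"
proof -
  let ?C = "inner_corners (strip_tab n v p)"
  have "Suc R < n \<Longrightarrow> p (Suc R) = 0" using lowest by force
  then have corner: "(R, p R - 1) \<in> ?C" using inner_corners_strip_tab[OF p] R by auto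
  have "fst y \<le> R" if "y \<in> ?C" for y
    using that lowest inner_corners_strip_tab[OF p] by (cases y) auto
  then have "x = (R, p R - 1)" if "x \<in> ?C \<and> (\<forall>y\<in>?C. fst y \<le> fst x)" for x
    using that corner inner_corners_same_row[OF skew_shape_strip_tab[OF p]]
    by (metis antisym fst_conv prod.collapse)
  then have "chosen_corner (strip_tab n v p) = (R, p R - 1)"
    unfolding chosen_corner_def using corner \<open>\<And>y. y \<in> ?C \<Longrightarrow> fst y \<le> R\<close>
    by (intro the_equality) auto
  moreover have "inner_cells (strip_tab n v p) \<noteq> {}" using corner inner_corners_subset_inner_cells by blast
  ultimately show ?thesis unfolding rect_step_def card_dom_strip_tab by simp
qed

lemma slide_strip_tab_shift:
  assumes R: "R < n" "0 < p R" and lowest: "\<forall>r<n. 0 < p r \<longrightarrow> r \<le> R"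
    and ordered: "Suc R < n \<Longrightarrow> p R = 1 \<Longrightarrow> v R < v (Suc R)"
  shows "slide (Suc n) (strip_tab n v p) (R, p R - 1) = strip_tab n v (p(R := p R - 1))"
proof -
  obtain c where c: "p R = Suc c" using R(2) gr0_implies_Suc by blast
  let ?T = "strip_tab n v p" and ?T' = "strip_tab n v (p(R := c))"
  have below: "Suc R < n \<Longrightarrow> p (Suc R) = 0" using lowest by force
  have shifted: "?T((R, c) := Some (v R), (R, Suc c) := None) = ?T'"
    using R(1) c by (auto simp: fun_eq_iff)
  have "slide (Suc n) ?T (R, c) = slide n ?T' (R, Suc c)"
  proof (cases "?T (Suc R, c)")
    case None
    then show ?thesis using R(1) c shifted by simp
  next
    case (Some b)
    then have "Suc R < n" "c = 0" "b = v (Suc R)" using below by (auto split: if_splits)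
    then have "v R < b" using ordered c by simp
    then show ?thesis using R(1) c shifted Some by simp
  qed
  moreover have "?T' (R, Suc (Suc c)) = None" "?T' (Suc R, Suc c) = None" using below by auto
  moreover obtain m where "n = Suc m" using R(1) not0_implies_Suc by fastforce
  ultimately have "slide (Suc n) ?T (R, c) = ?T'" by simp
  then show ?thesis using c by simp
qed

lemma slide_strip_tab_lift:
  assumes R: "Suc R < n" "p R = 1" and lowest: "\<forall>r<n. 0 < p r \<longrightarrow> r \<le> R"
    and unordered: "v (Suc R) \<le> v R"
  shows "\<exists>y. slide (Suc n) (strip_tab n v p) (R, p R - 1) y = Some (v (Suc R)) \<and> fst y \<le> R"
proof -
  let ?T = "strip_tab n v p"
  let ?T' = "?T((R, 0) := Some (v (Suc R)), (Suc R, 0) := None)"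
  have "p (Suc R) = 0" using lowest R(1) by force
  then have "slide (Suc n) ?T (R, 0) = slide n ?T' (Suc R, 0)"
    using R unordered by simp
  moreover have "?T' (Suc R, 0) = None" "?T' (R, 0) = Some (v (Suc R))" by simp_all
  from slide_moves_entry_northwest[OF this, of n] obtain y
    where "slide n ?T' (Suc R, 0) y = Some (v (Suc R))" "y \<le> (R, 0)" by blast
  ultimately show ?thesis using R(2) by (intro exI[of _ y]) (auto simp: less_eq_prod_def)
qed

lemma antimono_on_decrement_lowest:
  fixes p :: "nat \<Rightarrow> nat"
  assumes "antimono_on {..<n} p" "R < n" "\<forall>r<n. 0 < p r \<longrightarrow> r \<le> R"
  shows "antimono_on {..<n} (p(R := p R - 1))"
  unfolding monotone_on_def
proof (intro ballI impI)
  fix r r' assume r: "r \<in> {..<n}" "r' \<in> {..<n}" "r \<le> r'"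
  then have "p r' \<le> p r" using assms(1) by (simp add: monotone_on_def)
  moreover have "p r' = 0" if "R < r'"
    using assms(3) r(2) that by (metis lessThan_iff linorder_not_le neq0_conv)
  ultimately show "(p(R := p R - 1)) r' \<le> (p(R := p R - 1)) r"
    using r(3) by (cases "r = R"; cases "r' = R") auto
qed

lemma sum_decrement:
  fixes p :: "'a \<Rightarrow> nat"
  assumes "finite A" "R \<in> A" "0 < p R"
  shows "sum (p(R := p R - 1)) A + 1 = sum p A"
proof -
  have "sum (p(R := p R - 1)) (A - {R}) = sum p (A - {R})" by (rule sum.cong) auto
  then show ?thesis
    using sum.remove[OF assms(1,2), of p] sum.remove[OF assms(1,2), of "p(R := p R - 1)"] assms(3)
    by simp
qed

text \<open>Invariant of the rectification of \<open>T(w)\<close> as long as no entry has been lifted: the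
  indentation decreases weakly down the rows, and the entries already pushed into column 0
  increase downwards.\<close>

definition admissible_strip :: "nat \<Rightarrow> (nat \<Rightarrow> nat) \<Rightarrow> (nat \<Rightarrow> nat) \<Rightarrow> bool" where
  "admissible_strip n v p \<longleftrightarrow>
     antimono_on {..<n} p \<and> (\<forall>r. Suc r < n \<longrightarrow> p r = 0 \<longrightarrow> v r < v (Suc r))"

lemma rect_step_admissible_strip:
  assumes adm: "admissible_strip n v p" and pos: "0 < sum p {..<n}"
  shows "(\<exists>q. rect_step (strip_tab n v p) = strip_tab n v q \<and> admissible_strip n v q \<and>
            sum q {..<n} + 1 = sum p {..<n}) \<or>
         (\<exists>r y. Suc r < n \<and> v (Suc r) \<le> v r \<and> rect_step (strip_tab n v p) y = Some (v (Suc r)) \<and>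
            fst y \<le> r)"
proof -
  have p: "antimono_on {..<n} p" using adm unfolding admissible_strip_def by blast
  obtain r0 where "r0 < n" "0 < p r0"
    using pos by (metis lessThan_iff sum.neutral neq0_conv)
  then obtain R where R: "R < n" "0 < p R" and lowest: "\<forall>r<n. 0 < p r \<longrightarrow> r \<le> R"
    using Nat.ex_has_greatest_nat[of "\<lambda>r. r < n \<and> 0 < p r" r0 n] by auto
  note step = rect_step_strip_tab[OF p R lowest]
  show ?thesis
  proof (cases "Suc R < n \<and> p R = 1 \<and> v (Suc R) \<le> v R")
    case True
    then obtain y where "rect_step (strip_tab n v p) y = Some (v (Suc R))" "fst y \<le> R"
      using slide_strip_tab_lift[OF _ _ lowest, of v] step by auto
    then show ?thesis using True by blast
  next
    case False
    let ?q = "p(R := p R - 1)"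
    have "admissible_strip n v ?q"
      using adm False antimono_on_decrement_lowest[OF p R(1) lowest]
      unfolding admissible_strip_def by (auto simp: not_le)
    moreover have "sum ?q {..<n} + 1 = sum p {..<n}"
      using sum_decrement[of "{..<n}" R p] R by simp
    moreover have "rect_step (strip_tab n v p) = strip_tab n v ?q"
      using slide_strip_tab_shift[OF R lowest] False step by (simp add: not_le)
    ultimately show ?thesis by blast
  qed
qed

lemma funpow_rect_step_admissible_strip:
  assumes adm: "admissible_strip n v p" and "k \<le> sum p {..<n}"
  shows "(\<exists>q. (rect_step ^^ k) (strip_tab n v p) = strip_tab n v q \<and> admissible_strip n v q \<and>
            sum q {..<n} + k = sum p {..<n}) \<or>
         (\<exists>r y. Suc r < n \<and> v (Suc r) \<le> v r \<and>
            (rect_step ^^ k) (strip_tab n v p) y = Some (v (Suc r)) \<and> fst y \<le> r)"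
  using assms(2)
proof (induction k)
  case 0
  then show ?case using adm by auto
next
  case (Suc k)
  let ?T = "(rect_step ^^ k) (strip_tab n v p)"
  have fin: "finite (dom ?T)" and skew: "skew_shape (dom ?T)"
    using funpow_rect_step_skew_shape[OF finite_dom_strip_tab skew_shape_strip_tab] adm
    unfolding admissible_strip_def by blast+
  from Suc consider (strip) q where "?T = strip_tab n v q" "admissible_strip n v q"
      "sum q {..<n} + k = sum p {..<n}"
    | (lifted) r y where "Suc r < n" "v (Suc r) \<le> v r" "?T y = Some (v (Suc r))" "fst y \<le> r"
    by (meson Suc_leD)
  then show ?case
  proof cases
    case strip
    then have "0 < sum q {..<n}" using Suc.prems by linarith
    then show ?thesis
      using rect_step_admissible_strip[OF strip(2)] strip(1,3) by fastforce
  next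
    case lifted
    then obtain y' where "rect_step ?T y' = Some (v (Suc r))" "y' \<le> y"
      using rect_step_moves_entry_northwest[OF fin skew] by blast
    moreover have "fst y' \<le> r" using \<open>y' \<le> y\<close> lifted(4) by (simp add: less_eq_prod_def)
    ultimately show ?thesis using lifted(1,2) by (metis comp_apply funpow.simps(2))
  qed
qed

lemma rect_admissible_strip:
  assumes adm: "admissible_strip n v p"
  shows "(rect (strip_tab n v p) = strip_tab n v (\<lambda>_. 0) \<and>
            (\<forall>r. Suc r < n \<longrightarrow> v r < v (Suc r))) \<or>
         (\<exists>r y. Suc r < n \<and> v (Suc r) \<le> v r \<and> rect (strip_tab n v p) y = Some (v (Suc r)) \<and>
            fst y \<le> r)"
proof -
  have p: "antimono_on {..<n} p" using adm unfolding admissible_strip_def by blast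
  have "inner_cells (strip_tab n v p) = Sigma {..<n} (\<lambda>r. {..<p r})"
    using inner_cells_strip_tab[OF p] by auto
  then have rect: "rect (strip_tab n v p) = (rect_step ^^ sum p {..<n}) (strip_tab n v p)"
    unfolding rect_def by simp
  have "rect (strip_tab n v p) = strip_tab n v (\<lambda>_. 0) \<and> (\<forall>r. Suc r < n \<longrightarrow> v r < v (Suc r))"
    if "rect (strip_tab n v p) = strip_tab n v q" "admissible_strip n v q" "sum q {..<n} = 0" for q
  proof -
    have "\<forall>r<n. q r = 0" using that(3) by simp
    then show ?thesis using that(1,2) strip_tab_cong[of n v v q "\<lambda>_. 0"]
      unfolding admissible_strip_def by simp
  qed
  then show ?thesis
    using funpow_rect_step_admissible_strip[OF adm order_refl] unfolding rect[symmetric] by auto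
qed

section \<open>Stabilization at 1\<close>

lemma tab_power_strip_tab_1: "tab_power (strip_tab n v p) 1 = strip_tab n v p"
proof -
  have "row_cols (strip_tab n v p) r = (if r < n then {p r} else {})" for r
    by (auto simp: row_cols_def)
  then show ?thesis by (auto simp: fun_eq_iff tab_power_def Let_def)
qed

lemma stabilizes_at_1_strip_tab_iff:
  "stabilizes_at (strip_tab n v p) 1 \<longleftrightarrow>
    (\<forall>e r c r' c'. 0 < e \<and> e \<le> n \<longrightarrow> strip_tab n v p (r, c) = Some e \<longrightarrow>
       rect (strip_tab n v p) (r', c') = Some e \<longrightarrow> r' = r)"
  unfolding stabilizes_at_def Let_def tab_power_strip_tab_1 card_dom_strip_tab by simp

lemma stab_eq_1_iff: "stab S = 1 \<longleftrightarrow> stabilizes_at S 1"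
proof
  assume "stabilizes_at S 1"
  then show "stab S = 1"
    unfolding stab_def by (auto intro: Least_equality)
next
  assume stab: "stab S = 1"
  then have ex: "\<exists>k\<ge>1. stabilizes_at S k" unfolding stab_def by (metis zero_neq_one)
  then have "(LEAST k. k \<ge> 1 \<and> stabilizes_at S k) = 1" using stab unfolding stab_def by simp
  then show "stabilizes_at S 1" using LeastI_ex[OF ex] by simp
qed

lemma stab_word_rev_upt: "stab_word (rev [1..<Suc n]) = 1"
proof -
  let ?S = "strip_tab n Suc (\<lambda>r. n - 1 - r)"
  have len: "length (rev [1..<Suc n]) = n" by simp
  have "antidiag_tab (rev [1..<Suc n]) =
      strip_tab n (\<lambda>r. rev [1..<Suc n] ! (n - 1 - r)) (\<lambda>r. n - 1 - r)"
    using antidiag_tab_eq_strip_tab[of "rev [1..<Suc n]"] unfolding len .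
  also have "\<dots> = ?S" by (rule strip_tab_cong) (simp_all add: rev_nth del: upt_Suc)
  finally have S: "antidiag_tab (rev [1..<Suc n]) = ?S" .
  have "admissible_strip n Suc (\<lambda>r. n - 1 - r)"
    unfolding admissible_strip_def by (auto simp: monotone_on_def)
  then have rect: "rect ?S = strip_tab n Suc (\<lambda>_. 0)"
    using rect_admissible_strip by fastforce
  have "stabilizes_at ?S 1"
    unfolding stabilizes_at_1_strip_tab_iff rect by (auto split: if_splits)
  then show ?thesis unfolding stab_word_def S stab_eq_1_iff .
qed

lemma stab_word_eq_1_imp_eq_rev_upt:
  assumes w: "distinct w" "set w = {1..n}" and stab: "stab_word w = 1"
  shows "w = rev [1..<Suc n]"
proof -
  have len: "length w = n" using distinct_card[OF w(1)] w(2) by simp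
  define v where "v r = w ! (n - 1 - r)" for r
  let ?S = "strip_tab n v (\<lambda>r. n - 1 - r)"
  have S: "antidiag_tab w = ?S" using antidiag_tab_eq_strip_tab[of w] unfolding len v_def .
  have entries: "v r \<in> {1..n}" if "r < n" for r
    using that len w(2) nth_mem[of "n - 1 - r" w] unfolding v_def by auto
  have "stabilizes_at ?S 1" using stab unfolding stab_word_def S stab_eq_1_iff .
  note stable = this[unfolded stabilizes_at_1_strip_tab_iff, rule_format]
  have "fst y = Suc r" if "Suc r < n" "rect ?S y = Some (v (Suc r))" for r y
  proof (rule stable)
    show "0 < v (Suc r) \<and> v (Suc r) \<le> n" using entries[of "Suc r"] that(1) by simp
    show "?S (Suc r, n - 1 - Suc r) = Some (v (Suc r))" using that(1) by simp
    show "rect ?S (fst y, snd y) = Some (v (Suc r))" using that(2) by (simp only: prod.collapse)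
  qed
  then have no_lift:
    "\<not> (\<exists>r y. Suc r < n \<and> v (Suc r) \<le> v r \<and> rect ?S y = Some (v (Suc r)) \<and> fst y \<le> r)"
    by fastforce
  have "admissible_strip n v (\<lambda>r. n - 1 - r)"
    unfolding admissible_strip_def by (auto simp: monotone_on_def)
  then have increasing: "\<forall>r. Suc r < n \<longrightarrow> v r < v (Suc r)"
    using rect_admissible_strip no_lift by blast
  have "rev w ! i = v i" if "i < n" for i
    using that len by (simp add: rev_nth v_def)
  then have "sorted (rev w)"
    unfolding sorted_iff_nth_Suc using increasing len by (simp add: less_imp_le)
  then have "rev w = [1..<Suc n]"
    using sorted_distinct_set_unique[of "rev w" "[1..<Suc n]"] w
    by (simp del: upt_Suc add: atLeastLessThanSuc_atLeastAtMost)
  then show ?thesis by (metis rev_rev_ident)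
qed

theorem mainTheorem18:
  fixes n :: nat
  assumes "n \<ge> 1"
  shows "stab_word (rev [1..<Suc n]) = 1 \<and>
         (\<forall>w. distinct w \<and> set w = {1..n} \<longrightarrow> stab_word w = 1 \<longrightarrow> w = rev [1..<Suc n])"
  using stab_word_rev_upt stab_word_eq_1_imp_eq_rev_upt by blast

end
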